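(* Let $N\ge2$, $2_\ast<p<2^\ast$, and $Q\in L^\infty(\mathbb{R}^N)$, $Q\not\equiv0$, nonnegative and $\mathbb{Z}^N$-periodic. Let $\mathcal{K}=\{v\in L^{p'}(\mathbb{R}^N): J'(v)=0\}$, and suppose that $\mathcal{K}$ consists of only finitely many orbits $\mathcal{O}(w)=\{w(\cdot-y):y\in\mathbb{Z}^N\}$. Then $$\kappa:=\inf\{\|v-w\|_{p'}: v,w\in\mathcal{K},\ v\neq w\}>0.$$
   Context: $2_\ast=\frac{2(N+1)}{N-1}$, $2^\ast=\frac{2N}{N-2}$ ($N\ge3$), $2^\ast=\infty$ ($N=2$), $p'=p/(p-1)$. $\mathbf{R}:L^{p'}(\mathbb{R}^N)\to L^p(\mathbb{R}^N)$ is the bounded extension of $f\mapsto \mathrm{Re}(\Phi)\ast f$, where $\Phi(x)=\frac{i}{4}(2\pi|x|)^{-\frac{N-2}{2}}H^{(1)}_{\frac{N-2}{2}}(|x|)$ is the outgoing fundamental solution of $-\Delta-1$. $\mathbf{K}v=Q^{1/p}\mathbf{R}(Q^{1/p}v)$ and $J(v)=\frac1{p'}\|v\|_{p'}^{p'}-\frac12\int v\,\mathbf{K}(v)\,dx$ on $L^{p'}(\mathbb{R}^N)$, a $C^1$ functional with $J'(v)w=\int(|v|^{p'-2}v-\mathbf{K}(v))w\,dx$. *)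

theory Defs
  imports "HOL-Analysis.Analysis"
begin

definition memLp :: "real \<Rightarrow> (real^'n \<Rightarrow> real) \<Rightarrow> bool" where
  "memLp q f \<longleftrightarrow> f \<in> borel_measurable lebesgue \<and> integrable lebesgue (\<lambda>x. \<bar>f x\<bar> powr q)"

definition Lp_norm :: "real \<Rightarrow> (real^'n \<Rightarrow> real) \<Rightarrow> real" where
  "Lp_norm q f = (\<integral>x. \<bar>f x\<bar> powr q \<partial>lebesgue) powr (1 / q)"

definition conj_exp :: "real \<Rightarrow> real" where
  "conj_exp p = p / (p - 1)"

definition ae_eq :: "(real^'n \<Rightarrow> real) \<Rightarrow> (real^'n \<Rightarrow> real) \<Rightarrow> bool" where
  "ae_eq f g \<longleftrightarrow> (AE x in lebesgue. f x = g x)"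

definition int_lattice :: "(real^'n) set" where
  "int_lattice = {y. \<forall>i. y $ i \<in> \<int>}"

definition ess_bounded :: "(real^'n \<Rightarrow> real) \<Rightarrow> bool" where
  "ess_bounded Q \<longleftrightarrow> Q \<in> borel_measurable lebesgue \<and> (\<exists>C. AE x in lebesgue. \<bar>Q x\<bar> \<le> C)"

definition lower_crit :: "nat \<Rightarrow> real" where
  "lower_crit N = 2 * (real N + 1) / (real N - 1)"

definition below_upper_crit :: "nat \<Rightarrow> real \<Rightarrow> bool" where
  "below_upper_crit N p \<longleftrightarrow> (N = 2 \<or> p < 2 * real N / (real N - 2))"

section \<open>Bessel and Hankel functions (integral representations, DLMF 10.9.6/10.9.7, x > 0)\<close>

definition besselJ :: "real \<Rightarrow> real \<Rightarrow> real" where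
  "besselJ \<nu> x = (1/pi) * (LBINT \<theta>=0..pi. cos (x * sin \<theta> - \<nu> * \<theta>))
      - (sin (\<nu> * pi) / pi) * (LINT t:{0..}|lborel. exp (- x * sinh t - \<nu> * t))"

definition besselY :: "real \<Rightarrow> real \<Rightarrow> real" where
  "besselY \<nu> x = (1/pi) * (LBINT \<theta>=0..pi. sin (x * sin \<theta> - \<nu> * \<theta>))
      - (1/pi) * (LINT t:{0..}|lborel. (exp (\<nu> * t) + exp (- \<nu> * t) * cos (\<nu> * pi)) * exp (- x * sinh t))"

definition hankel1 :: "real \<Rightarrow> real \<Rightarrow> complex" where
  "hankel1 \<nu> x = Complex (besselJ \<nu> x) (besselY \<nu> x)"

text \<open>Outgoing fundamental solution of -Delta - 1 on R^N, N = CARD('n).\<close>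
definition Phi :: "real^'n \<Rightarrow> complex" where
  "Phi x = (\<i> / 4) * of_real ((2 * pi * norm x) powr (- (real CARD('n) - 2) / 2))
            * hankel1 ((real CARD('n) - 2) / 2) (norm x)"

definition convolution :: "(real^'n \<Rightarrow> real) \<Rightarrow> (real^'n \<Rightarrow> real) \<Rightarrow> real^'n \<Rightarrow> real" where
  "convolution g f x = (\<integral>y. g (x - y) * f y \<partial>lebesgue)"

definition cont_compact_supp :: "(real^'n \<Rightarrow> real) \<Rightarrow> bool" where
  "cont_compact_supp f \<longleftrightarrow> continuous_on UNIV f \<and> bounded {x. f x \<noteq> 0}"

text \<open>R is (a representative of) the bounded linear extension L^{p'} -> L^p of
  f \<mapsto> Re(Phi) * f, initially defined on continuous compactly supported f.\<close>
definition is_R :: "real \<Rightarrow> ((real^'n \<Rightarrow> real) \<Rightarrow> (real^'n \<Rightarrow> real)) \<Rightarrow> bool" where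
  "is_R p R \<longleftrightarrow>
     (\<forall>f. memLp (conj_exp p) f \<longrightarrow> memLp p (R f)) \<and>
     (\<forall>f g. memLp (conj_exp p) f \<longrightarrow> memLp (conj_exp p) g \<longrightarrow> ae_eq f g \<longrightarrow> ae_eq (R f) (R g)) \<and>
     (\<forall>f g a b. memLp (conj_exp p) f \<longrightarrow> memLp (conj_exp p) g \<longrightarrow>
         ae_eq (R (\<lambda>x. a * f x + b * g x)) (\<lambda>x. a * R f x + b * R g x)) \<and>
     (\<exists>C. \<forall>f. memLp (conj_exp p) f \<longrightarrow> Lp_norm p (R f) \<le> C * Lp_norm (conj_exp p) f) \<and>
     (\<forall>f. cont_compact_supp f \<longrightarrow> ae_eq (R f) (convolution (\<lambda>x. Re (Phi x)) f))"

definition K_op :: "real \<Rightarrow> (real^'n \<Rightarrow> real) \<Rightarrow> ((real^'n \<Rightarrow> real) \<Rightarrow> (real^'n \<Rightarrow> real))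
                    \<Rightarrow> (real^'n \<Rightarrow> real) \<Rightarrow> (real^'n \<Rightarrow> real)" where
  "K_op p Q R v = (\<lambda>x. Q x powr (1/p) * R (\<lambda>y. Q y powr (1/p) * v y) x)"

definition J_deriv :: "real \<Rightarrow> (real^'n \<Rightarrow> real) \<Rightarrow> ((real^'n \<Rightarrow> real) \<Rightarrow> (real^'n \<Rightarrow> real))
                    \<Rightarrow> (real^'n \<Rightarrow> real) \<Rightarrow> (real^'n \<Rightarrow> real) \<Rightarrow> real" where
  "J_deriv p Q R v w = (\<integral>x. (\<bar>v x\<bar> powr (conj_exp p - 2) * v x - K_op p Q R v x) * w x \<partial>lebesgue)"

definition crit_set :: "real \<Rightarrow> (real^'n \<Rightarrow> real) \<Rightarrow> ((real^'n \<Rightarrow> real) \<Rightarrow> (real^'n \<Rightarrow> real))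
                    \<Rightarrow> (real^'n \<Rightarrow> real) set" where
  "crit_set p Q R = {v. memLp (conj_exp p) v \<and>
      (\<forall>w. memLp (conj_exp p) w \<longrightarrow> J_deriv p Q R v w = 0)}"

definition orbit :: "(real^'n \<Rightarrow> real) \<Rightarrow> (real^'n \<Rightarrow> real) set" where
  "orbit w = {v. \<exists>y\<in>int_lattice. ae_eq v (\<lambda>x. w (x - y))}"

end

theory Submission
  imports Defs
begin

text \<open>Write \<open>q = p'\<close>. If \<open>v = f(x - y)\<close> and \<open>w = g(x - z)\<close> a.e. with \<open>y, z\<close> lattice points, translation
  invariance gives \<open>\<parallel>v - w\<parallel> = \<parallel>f(x - d) - g\<parallel>\<close> with \<open>d = y - z\<close>, so it suffices to bound these
  distances from below for each of the finitely many pairs \<open>(f, g)\<close> of orbit representatives.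
  If \<open>g \<noteq> 0\<close>, most of the mass of \<open>g\<close> lies in a ball of radius \<open>r\<close> and only little mass of
  \<open>f\<close> lies outside a ball of radius \<open>s\<close>; for \<open>|d| > r + s\<close> the translate \<open>f(x - d)\<close> therefore
  cannot cancel \<open>g\<close> on the first ball, which bounds \<open>\<parallel>f(x - d) - g\<parallel>\<close> from below uniformly.
  The finitely many lattice points with \<open>|d| \<le> r + s\<close> each give a positive distance unless
  \<open>f(x - d) = g\<close> a.e. If \<open>g = 0\<close>, the distance is \<open>\<parallel>f\<parallel>\<close> for every \<open>d\<close>.\<close>

section \<open>Translation invariance of Lebesgue measure\<close>

lemma lebesgue_measurable_ident [measurable]:
  "(\<lambda>x::'a::euclidean_space. x) \<in> borel_measurable lebesgue"
  using id_borel_measurable_lebesgue by (simp add: id_def)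

lemma lebesgue_translate_measurable:
  "(\<lambda>x::'a::euclidean_space. x - t) \<in> lebesgue \<rightarrow>\<^sub>M lebesgue"
  and distr_lebesgue_translate:
  "distr lebesgue lebesgue (\<lambda>x::'a::euclidean_space. x - t) = lebesgue"
proof -
  have affine: "(\<lambda>x::'a. - t + (\<Sum>j\<in>Basis. (1 * (x \<bullet> j)) *\<^sub>R j)) = (\<lambda>x. x - t)"
    by (simp add: euclidean_representation)
  show "(\<lambda>x::'a. x - t) \<in> lebesgue \<rightarrow>\<^sub>M lebesgue"
    using lebesgue_affine_measurable[of "\<lambda>_. 1" "- t"] unfolding affine by simp
  show "distr lebesgue lebesgue (\<lambda>x::'a. x - t) = lebesgue"
    using lebesgue_affine_euclidean[of "\<lambda>_. 1" "- t"] unfolding affine by (simp add: density_1)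
qed

lemma borel_measurable_translate:
  fixes f :: "'a::euclidean_space \<Rightarrow> real"
  assumes "f \<in> borel_measurable lebesgue"
  shows "(\<lambda>x. f (x - t)) \<in> borel_measurable lebesgue"
  using measurable_compose[OF lebesgue_translate_measurable assms] .

lemma integral_translate:
  fixes h :: "'a::euclidean_space \<Rightarrow> real"
  assumes "h \<in> borel_measurable lebesgue"
  shows "(\<integral>x. h (x - t) \<partial>lebesgue) = integral\<^sup>L lebesgue h"
  using integral_distr[OF lebesgue_translate_measurable assms, of t]
  by (simp add: distr_lebesgue_translate)

lemma integrable_translate_iff:
  fixes h :: "'a::euclidean_space \<Rightarrow> real"
  assumes "h \<in> borel_measurable lebesgue"
  shows "integrable lebesgue (\<lambda>x. h (x - t)) \<longleftrightarrow> integrable lebesgue h"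
  using integrable_distr_eq[OF lebesgue_translate_measurable assms, of t]
  by (simp add: distr_lebesgue_translate)

lemma AE_translate:
  fixes P :: "'a::euclidean_space \<Rightarrow> bool"
  assumes "Measurable.pred lebesgue P" and "AE x in lebesgue. P x"
  shows "AE x in lebesgue. P (x - t)"
  using AE_distr_iff[OF lebesgue_translate_measurable assms(1)[unfolded pred_def], of t] assms(2)
  unfolding distr_lebesgue_translate by simp

lemma ae_eq_translate_iff:
  fixes f g :: "real^'n \<Rightarrow> real"
  assumes [measurable]: "f \<in> borel_measurable lebesgue" "g \<in> borel_measurable lebesgue"
  shows "ae_eq (\<lambda>x. f (x - t)) (\<lambda>x. g (x - t)) \<longleftrightarrow> ae_eq f g"
proof
  have [measurable]: "(\<lambda>x. f (x - t)) \<in> borel_measurable lebesgue" "(\<lambda>x. g (x - t)) \<in> borel_measurable lebesgue"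
    by (simp_all add: borel_measurable_translate)
  have "Measurable.pred lebesgue (\<lambda>x. f (x - t) = g (x - t))" by measurable
  moreover assume "ae_eq (\<lambda>x. f (x - t)) (\<lambda>x. g (x - t))"
  ultimately have "AE x in lebesgue. f (x - (- t) - t) = g (x - (- t) - t)"
    unfolding ae_eq_def by (rule AE_translate)
  then show "ae_eq f g" by (simp add: ae_eq_def)
next
  have "Measurable.pred lebesgue (\<lambda>x. f x = g x)" by measurable
  moreover assume "ae_eq f g"
  ultimately show "ae_eq (\<lambda>x. f (x - t)) (\<lambda>x. g (x - t))"
    unfolding ae_eq_def by (rule AE_translate)
qed

lemma memLp_translate:
  assumes "memLp q f"
  shows "memLp q (\<lambda>x. f (x - t))"
proof -
  have [measurable]: "f \<in> borel_measurable lebesgue" using assms by (simp add: memLp_def)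
  have "(\<lambda>x. \<bar>f x\<bar> powr q) \<in> borel_measurable lebesgue" by measurable
  then show ?thesis
    using assms integrable_translate_iff[of "\<lambda>x. \<bar>f x\<bar> powr q" t]
    by (simp add: memLp_def borel_measurable_translate)
qed

lemma powr_add_le:
  fixes q s t :: real
  assumes q: "q \<ge> 1" and "s \<ge> 0" "t \<ge> 0"
  shows "(s + t) powr q \<le> 2 powr (q - 1) * (s powr q + t powr q)"
proof (cases "s = 0 \<or> t = 0")
  case True
  have "1 \<le> 2 powr (q - 1)" using q by (simp add: ge_one_powr_ge_zero)
  then have "u powr q \<le> 2 powr (q - 1) * u powr q" for u :: real
    using mult_right_mono[of 1 "2 powr (q - 1)" "u powr q"] by simp
  then show ?thesis using True by auto
next
  case False
  have "((s + t) / 2) powr q \<le> (s powr q + t powr q) / 2"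
    using convex_onD[OF powr_convex[OF q], of "1/2" s t] False assms by (simp add: add_divide_distrib)
  then have "2 powr q * ((s + t) / 2) powr q \<le> 2 powr q * ((s powr q + t powr q) / 2)"
    by (intro mult_left_mono) auto
  moreover have "2 powr q * ((s + t) / 2) powr q = (s + t) powr q"
    using assms by (simp add: powr_mult[symmetric] add_divide_distrib)
  ultimately show ?thesis by (simp add: powr_diff)
qed

lemma memLp_diff:
  assumes q: "q \<ge> 1" and f: "memLp q f" and g: "memLp q g"
  shows "memLp q (\<lambda>x. f x - g x)"
proof -
  have [measurable]: "f \<in> borel_measurable lebesgue" "g \<in> borel_measurable lebesgue"
    using f g by (simp_all add: memLp_def)
  have "integrable lebesgue (\<lambda>x. 2 powr (q - 1) * (\<bar>f x\<bar> powr q + \<bar>g x\<bar> powr q))"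
    using f g by (simp add: memLp_def)
  then have "integrable lebesgue (\<lambda>x. \<bar>f x - g x\<bar> powr q)"
  proof (rule Bochner_Integration.integrable_bound)
    show "AE x in lebesgue. norm (\<bar>f x - g x\<bar> powr q) \<le> norm (2 powr (q - 1) * (\<bar>f x\<bar> powr q + \<bar>g x\<bar> powr q))"
    proof (rule AE_I2)
      fix x
      have "\<bar>f x - g x\<bar> powr q \<le> (\<bar>f x\<bar> + \<bar>g x\<bar>) powr q"
        using q by (intro powr_mono2) auto
      also have "\<dots> \<le> 2 powr (q - 1) * (\<bar>f x\<bar> powr q + \<bar>g x\<bar> powr q)"
        using q by (intro powr_add_le) auto
      finally show "norm (\<bar>f x - g x\<bar> powr q) \<le> norm (2 powr (q - 1) * (\<bar>f x\<bar> powr q + \<bar>g x\<bar> powr q))"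
        by simp
    qed
  qed measurable
  then show ?thesis by (simp add: memLp_def)
qed

lemma Lp_norm_cong_AE:
  assumes [measurable]: "f \<in> borel_measurable lebesgue" "g \<in> borel_measurable lebesgue"
    and "AE x in lebesgue. f x = g x"
  shows "Lp_norm q f = Lp_norm q g"
  unfolding Lp_norm_def using assms(3) by (subst integral_cong_AE) auto

lemma Lp_norm_translate:
  assumes [measurable]: "f \<in> borel_measurable lebesgue"
  shows "Lp_norm q (\<lambda>x. f (x - t)) = Lp_norm q f"
proof -
  have "(\<lambda>x. \<bar>f x\<bar> powr q) \<in> borel_measurable lebesgue" by measurable
  from integral_translate[OF this] show ?thesis by (simp add: Lp_norm_def)
qed

lemma integral_abs_powr_pos_iff:
  assumes "memLp q f"
  shows "0 < (\<integral>x. \<bar>f x\<bar> powr q \<partial>lebesgue) \<longleftrightarrow> \<not> (AE x in lebesgue. f x = 0)"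
proof -
  have "0 \<le> (\<integral>x. \<bar>f x\<bar> powr q \<partial>lebesgue)" by (rule integral_nonneg_AE) auto
  moreover have "(\<integral>x. \<bar>f x\<bar> powr q \<partial>lebesgue) = 0 \<longleftrightarrow> (AE x in lebesgue. f x = 0)"
    using integral_nonneg_eq_0_iff_AE[where f="\<lambda>x. \<bar>f x\<bar> powr q"] assms by (simp add: memLp_def)
  ultimately show ?thesis by linarith
qed

lemma Lp_norm_pos_iff:
  assumes "memLp q f"
  shows "0 < Lp_norm q f \<longleftrightarrow> \<not> (AE x in lebesgue. f x = 0)"
proof -
  have "0 \<le> (\<integral>x. \<bar>f x\<bar> powr q \<partial>lebesgue)" by (rule integral_nonneg_AE) auto
  then have "0 < Lp_norm q f \<longleftrightarrow> 0 < (\<integral>x. \<bar>f x\<bar> powr q \<partial>lebesgue)"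
    by (simp add: Lp_norm_def less_le)
  with integral_abs_powr_pos_iff[OF assms] show ?thesis by simp
qed

section \<open>Far translates\<close>

lemma integrable_restrict_pred:
  fixes h :: "'a::euclidean_space \<Rightarrow> real"
  assumes "integrable lebesgue h" and "Measurable.pred lebesgue P"
  shows "integrable lebesgue (\<lambda>x. if P x then h x else 0)"
proof (rule Bochner_Integration.integrable_bound[OF assms(1)])
  have [measurable]: "h \<in> borel_measurable lebesgue" "Measurable.pred lebesgue P"
    using assms by simp_all
  show "(\<lambda>x. if P x then h x else 0) \<in> borel_measurable lebesgue" by measurable
qed auto

lemma tendsto_integral_restrict_cball:
  fixes h :: "'a::euclidean_space \<Rightarrow> real"
  assumes h: "integrable lebesgue h"
  shows "(\<lambda>n::nat. \<integral>x. (if norm x \<le> real n then h x else 0) \<partial>lebesgue) \<longlonglongrightarrow> integral\<^sup>L lebesgue h"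
proof (rule Bochner_Integration.integral_dominated_convergence[where w="\<lambda>x. \<bar>h x\<bar>"])
  have [measurable]: "h \<in> borel_measurable lebesgue" using h by simp
  show "(\<lambda>x. if norm x \<le> real n then h x else 0) \<in> borel_measurable lebesgue" for n
    by measurable
  show "AE x in lebesgue. (\<lambda>n. if norm x \<le> real n then h x else 0) \<longlonglongrightarrow> h x"
  proof (rule AE_I2, rule tendsto_eventually)
    fix x :: 'a
    obtain N :: nat where "norm x \<le> real N" using real_arch_simple by blast
    then show "\<forall>\<^sub>F n in sequentially. (if norm x \<le> real n then h x else 0) = h x"
      unfolding eventually_sequentially by (intro exI[of _ N]) auto
  qed
qed (use h in auto)

lemma integral_restrict_cball_translate_le:
  fixes h :: "'a::euclidean_space \<Rightarrow> real"
  assumes h: "integrable lebesgue h" and h_nonneg: "\<And>x. 0 \<le> h x" and d: "r + s < norm d"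
  shows "(\<integral>x. (if norm x \<le> r then h (x - d) else 0) \<partial>lebesgue)
    \<le> (\<integral>x. (if s < norm x then h x else 0) \<partial>lebesgue)"
proof -
  have [measurable]: "h \<in> borel_measurable lebesgue" using h by simp
  have "(\<lambda>x. if norm (x + d) \<le> r then h x else 0) \<in> borel_measurable lebesgue" by measurable
  from integral_translate[OF this, of d]
  have "(\<integral>x. (if norm x \<le> r then h (x - d) else 0) \<partial>lebesgue)
      = (\<integral>x. (if norm (x + d) \<le> r then h x else 0) \<partial>lebesgue)" by simp
  also have "\<dots> \<le> (\<integral>x. (if s < norm x then h x else 0) \<partial>lebesgue)"
  proof (rule integral_mono)
    show "integrable lebesgue (\<lambda>x. if norm (x + d) \<le> r then h x else 0)"
      by (rule integrable_restrict_pred[OF h]) measurable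
    show "integrable lebesgue (\<lambda>x. if s < norm x then h x else 0)"
      by (rule integrable_restrict_pred[OF h]) measurable
    fix x :: 'a
    have "norm d \<le> norm (x + d) + norm x" using norm_triangle_ineq4[of "x + d" x] by simp
    then show "(if norm (x + d) \<le> r then h x else 0) \<le> (if s < norm x then h x else 0)"
      using d h_nonneg[of x] by auto
  qed
  finally show ?thesis .
qed

lemma powr_abs_diff_ge:
  fixes a b q :: real
  assumes q: "q \<ge> 1"
  shows "2 powr (1 - q) * \<bar>a\<bar> powr q - \<bar>b\<bar> powr q \<le> \<bar>b - a\<bar> powr q"
proof -
  have "\<bar>a\<bar> powr q \<le> (\<bar>b - a\<bar> + \<bar>b\<bar>) powr q"
    using q by (intro powr_mono2) auto
  also have "\<dots> \<le> 2 powr (q - 1) * (\<bar>b - a\<bar> powr q + \<bar>b\<bar> powr q)"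
    using q by (intro powr_add_le) auto
  finally have "2 powr (1 - q) * \<bar>a\<bar> powr q
      \<le> 2 powr (1 - q) * 2 powr (q - 1) * (\<bar>b - a\<bar> powr q + \<bar>b\<bar> powr q)"
    by (simp add: mult.assoc)
  then show ?thesis by (simp add: powr_add[symmetric])
qed

lemma tendsto_integral_restrict_outside_cball:
  fixes h :: "'a::euclidean_space \<Rightarrow> real"
  assumes h: "integrable lebesgue h"
  shows "(\<lambda>n::nat. \<integral>x. (if real n < norm x then h x else 0) \<partial>lebesgue) \<longlonglongrightarrow> 0"
proof -
  have "(\<integral>x. (if real n < norm x then h x else 0) \<partial>lebesgue)
      = integral\<^sup>L lebesgue h - (\<integral>x. (if norm x \<le> real n then h x else 0) \<partial>lebesgue)" for n :: nat
  proof -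
    have hn: "integrable lebesgue (\<lambda>x. if norm x \<le> real n then h x else 0)"
      by (rule integrable_restrict_pred[OF h]) measurable
    have "integral\<^sup>L lebesgue h - (\<integral>x. (if norm x \<le> real n then h x else 0) \<partial>lebesgue)
        = (\<integral>x. h x - (if norm x \<le> real n then h x else 0) \<partial>lebesgue)"
      using Bochner_Integration.integral_diff[OF h hn] by simp
    also have "\<dots> = (\<integral>x. (if real n < norm x then h x else 0) \<partial>lebesgue)"
      by (rule Bochner_Integration.integral_cong) auto
    finally show ?thesis by simp
  qed
  moreover have "(\<lambda>n::nat. integral\<^sup>L lebesgue h - (\<integral>x. (if norm x \<le> real n then h x else 0) \<partial>lebesgue))
      \<longlonglongrightarrow> integral\<^sup>L lebesgue h - integral\<^sup>L lebesgue h"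
    by (intro tendsto_diff tendsto_const tendsto_integral_restrict_cball h)
  ultimately show ?thesis by simp
qed

lemma integral_abs_powr_diff_ge:
  fixes f g :: "real^'n \<Rightarrow> real"
  assumes q: "q \<ge> 1" and f: "memLp q f" and g: "memLp q g"
  shows "2 powr (1 - q) * (\<integral>x. (if norm x \<le> r then \<bar>g x\<bar> powr q else 0) \<partial>lebesgue)
      - (\<integral>x. (if norm x \<le> r then \<bar>f x\<bar> powr q else 0) \<partial>lebesgue)
    \<le> (\<integral>x. \<bar>f x - g x\<bar> powr q \<partial>lebesgue)"
proof -
  define a :: real where "a = 2 powr (1 - q)"
  have [measurable]: "f \<in> borel_measurable lebesgue" "g \<in> borel_measurable lebesgue"
    using f g by (simp_all add: memLp_def)
  have fi: "integrable lebesgue (\<lambda>x. \<bar>f x\<bar> powr q)" and gi: "integrable lebesgue (\<lambda>x. \<bar>g x\<bar> powr q)"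
    using f g by (simp_all add: memLp_def)
  have gr: "integrable lebesgue (\<lambda>x. if norm x \<le> r then a * \<bar>g x\<bar> powr q else 0)"
    by (intro integrable_restrict_pred integrable_mult_right gi) measurable
  have fr: "integrable lebesgue (\<lambda>x. if norm x \<le> r then \<bar>f x\<bar> powr q else 0)"
    by (rule integrable_restrict_pred[OF fi]) measurable
  have "a * (\<integral>x. (if norm x \<le> r then \<bar>g x\<bar> powr q else 0) \<partial>lebesgue)
      = (\<integral>x. (if norm x \<le> r then a * \<bar>g x\<bar> powr q else 0) \<partial>lebesgue)"
    unfolding integral_mult_right_zero[symmetric] by (rule Bochner_Integration.integral_cong) auto
  then have "a * (\<integral>x. (if norm x \<le> r then \<bar>g x\<bar> powr q else 0) \<partial>lebesgue)
      - (\<integral>x. (if norm x \<le> r then \<bar>f x\<bar> powr q else 0) \<partial>lebesgue)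
      = (\<integral>x. (if norm x \<le> r then a * \<bar>g x\<bar> powr q - \<bar>f x\<bar> powr q else 0) \<partial>lebesgue)"
    using Bochner_Integration.integral_diff[OF gr fr]
    by (simp add: if_distrib[of "\<lambda>u. u - _"] cong: if_cong)
  also have "\<dots> \<le> (\<integral>x. \<bar>f x - g x\<bar> powr q \<partial>lebesgue)"
  proof (rule integral_mono)
    have "integrable lebesgue (\<lambda>x. a * \<bar>g x\<bar> powr q - \<bar>f x\<bar> powr q)"
      by (intro Bochner_Integration.integrable_diff integrable_mult_right gi fi)
    then show "integrable lebesgue (\<lambda>x. if norm x \<le> r then a * \<bar>g x\<bar> powr q - \<bar>f x\<bar> powr q else 0)"
      by (rule integrable_restrict_pred) measurable
    show "integrable lebesgue (\<lambda>x. \<bar>f x - g x\<bar> powr q)"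
      using memLp_diff[OF q f g] by (simp add: memLp_def)
    show "(if norm x \<le> r then a * \<bar>g x\<bar> powr q - \<bar>f x\<bar> powr q else 0) \<le> \<bar>f x - g x\<bar> powr q" for x
      using powr_abs_diff_ge[OF q, of "g x" "f x"] by (auto simp: a_def)
  qed
  finally show ?thesis by (simp add: a_def)
qed

lemma far_translates_separated:
  fixes f g :: "real^'n \<Rightarrow> real"
  assumes q: "q \<ge> 1" and f: "memLp q f" and g: "memLp q g"
    and g_nonzero: "\<not> (AE x in lebesgue. g x = 0)"
  shows "\<exists>c>0. \<exists>R. \<forall>d. R < norm d \<longrightarrow> c \<le> (\<integral>x. \<bar>f (x - d) - g x\<bar> powr q \<partial>lebesgue)"
proof -
  define G where "G = (\<integral>x. \<bar>g x\<bar> powr q \<partial>lebesgue)"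
  define a :: real where "a = 2 powr (1 - q)"
  have G: "0 < G" using integral_abs_powr_pos_iff[OF g] g_nonzero by (simp add: G_def)
  have a: "0 < a" by (simp add: a_def)
  have fi: "integrable lebesgue (\<lambda>x. \<bar>f x\<bar> powr q)" and gi: "integrable lebesgue (\<lambda>x. \<bar>g x\<bar> powr q)"
    using f g by (simp_all add: memLp_def)
  have "\<forall>\<^sub>F n in sequentially. G / 2 < (\<integral>x. (if norm x \<le> real n then \<bar>g x\<bar> powr q else 0) \<partial>lebesgue)"
    using tendsto_integral_restrict_cball[OF gi] G unfolding G_def by (intro order_tendstoD(1)) auto
  then obtain r :: nat
    where r: "G / 2 < (\<integral>x. (if norm x \<le> real r then \<bar>g x\<bar> powr q else 0) \<partial>lebesgue)"
    using eventually_sequentially by auto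
  have "\<forall>\<^sub>F n in sequentially. (\<integral>x. (if real n < norm x then \<bar>f x\<bar> powr q else 0) \<partial>lebesgue) < a * G / 4"
    using tendsto_integral_restrict_outside_cball[OF fi] a G by (intro order_tendstoD(2)) auto
  then obtain s :: nat
    where s: "(\<integral>x. (if real s < norm x then \<bar>f x\<bar> powr q else 0) \<partial>lebesgue) < a * G / 4"
    using eventually_sequentially by auto
  have "a * G / 4 \<le> (\<integral>x. \<bar>f (x - d) - g x\<bar> powr q \<partial>lebesgue)" if d: "real r + real s < norm d" for d
  proof -
    have "(\<integral>x. (if norm x \<le> real r then \<bar>f (x - d)\<bar> powr q else 0) \<partial>lebesgue) < a * G / 4"
      using integral_restrict_cball_translate_le[OF fi _ d] s by fastforce
    moreover have "a * (G / 2) < a * (\<integral>x. (if norm x \<le> real r then \<bar>g x\<bar> powr q else 0) \<partial>lebesgue)"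
      using mult_strict_left_mono[OF r a] .
    ultimately show ?thesis
      using integral_abs_powr_diff_ge[OF q memLp_translate[OF f] g, of "real r" d] unfolding a_def
      by linarith
  qed
  then show ?thesis using a G by (intro exI[of _ "a * G / 4"] conjI exI[of _ "real r + real s"]) auto
qed

section \<open>Lattice translates and orbits\<close>

lemma finite_ex_pos_lower_bound:
  fixes F :: "'a \<Rightarrow> 'b \<Rightarrow> real"
  assumes "finite S" and "\<And>s. s \<in> S \<Longrightarrow> \<exists>c>0. \<forall>x\<in>A s. c \<le> F s x"
  shows "\<exists>c>0. \<forall>s\<in>S. \<forall>x\<in>A s. c \<le> F s x"
proof -
  have "\<forall>\<^sub>F c in at_right 0. \<forall>x\<in>A s. c \<le> F s x" if s: "s \<in> S" for s
  proof -
    obtain b where "0 < b" "\<forall>x\<in>A s. b \<le> F s x" using assms(2)[OF s] by blast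
    then show ?thesis unfolding eventually_at_right_field by force
  qed
  then have "\<forall>\<^sub>F c in at_right 0. 0 < c \<and> (\<forall>s\<in>S. \<forall>x\<in>A s. c \<le> F s x)"
    using assms(1) by (intro eventually_conj eventually_at_right_less eventually_ball_finite) auto
  then show ?thesis using eventually_happens'[OF trivial_limit_at_right_real] by blast
qed

lemma finite_int_lattice_cball: "finite {d::real^'n. d \<in> int_lattice \<and> norm d \<le> R}"
proof -
  define M where "M = \<lceil>R\<rceil>"
  let ?S = "(\<lambda>k. \<chi> i. real_of_int (k i)) ` (PiE UNIV (\<lambda>_. {-M..M}))"
  have "{d::real^'n. d \<in> int_lattice \<and> norm d \<le> R} \<subseteq> ?S"
  proof
    fix d :: "real^'n" assume d: "d \<in> {d. d \<in> int_lattice \<and> norm d \<le> R}"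
    then have "d = (\<chi> i. real_of_int \<lfloor>d $ i\<rfloor>)"
      by (simp add: int_lattice_def vec_eq_iff)
    moreover have "\<lfloor>d $ i\<rfloor> \<in> {-M..M}" for i
    proof -
      have "\<bar>d $ i\<bar> \<le> R" using component_le_norm_cart[of d i] d by auto
      then show ?thesis unfolding M_def by (auto simp: floor_le_iff le_floor_iff) linarith+
    qed
    ultimately show "d \<in> ?S" by (intro image_eqI[of _ _ "\<lambda>i. \<lfloor>d $ i\<rfloor>"]) auto
  qed
  moreover have "finite ?S" by (intro finite_imageI finite_PiE) auto
  ultimately show ?thesis by (rule finite_subset)
qed

lemma Lp_norm_translate_diff_null:
  assumes f: "memLp q f" and [measurable]: "g \<in> borel_measurable lebesgue"
    and g_null: "AE x in lebesgue. g x = 0"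
  shows "Lp_norm q (\<lambda>x. f (x - d) - g x) = Lp_norm q f"
proof -
  have [measurable]: "f \<in> borel_measurable lebesgue" using f by (simp add: memLp_def)
  have [measurable]: "(\<lambda>x. f (x - d)) \<in> borel_measurable lebesgue"
    by (simp add: borel_measurable_translate)
  have "Lp_norm q (\<lambda>x. f (x - d) - g x) = Lp_norm q (\<lambda>x. f (x - d))"
    using g_null by (intro Lp_norm_cong_AE) auto
  then show ?thesis by (simp add: Lp_norm_translate)
qed

lemma lattice_translates_separated:
  fixes f g :: "real^'n \<Rightarrow> real"
  assumes q: "q \<ge> 1" and f: "memLp q f" and g: "memLp q g"
  shows "\<exists>c>0. \<forall>d\<in>int_lattice. \<not> ae_eq (\<lambda>x. f (x - d)) g \<longrightarrow> c \<le> Lp_norm q (\<lambda>x. f (x - d) - g x)"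
proof -
  have [measurable]: "f \<in> borel_measurable lebesgue" "g \<in> borel_measurable lebesgue"
    using f g by (simp_all add: memLp_def)
  have pos: "0 < Lp_norm q (\<lambda>x. f (x - d) - g x)" if "\<not> ae_eq (\<lambda>x. f (x - d)) g" for d
    using that Lp_norm_pos_iff[OF memLp_diff[OF q memLp_translate[OF f] g]] by (simp add: ae_eq_def)
  show ?thesis
  proof (cases "AE x in lebesgue. g x = 0")
    case True
    then have Lp_norm_eq: "Lp_norm q (\<lambda>x. f (x - d) - g x) = Lp_norm q f" for d
      by (rule Lp_norm_translate_diff_null[OF f, rotated]) measurable
    then show ?thesis
    proof (cases "0 < Lp_norm q f")
      case False
      then have "ae_eq (\<lambda>x. f (x - d)) g" for d using pos[of d] False unfolding Lp_norm_eq by blast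
      then show ?thesis by (intro exI[of _ 1]) auto
    qed auto
  next
    case False
    obtain c R where c: "0 < c" and far: "\<And>d. R < norm d \<Longrightarrow> c \<le> (\<integral>x. \<bar>f (x - d) - g x\<bar> powr q \<partial>lebesgue)"
      using far_translates_separated[OF q f g False] by blast
    define N where "N = {d \<in> int_lattice. norm d \<le> R \<and> \<not> ae_eq (\<lambda>x. f (x - d)) g}"
    have finite_N: "finite N" unfolding N_def by (rule finite_subset[OF _ finite_int_lattice_cball[of R]]) auto
    define c' where "c' = Min (insert 1 ((\<lambda>d. Lp_norm q (\<lambda>x. f (x - d) - g x)) ` N))"
    have c': "0 < c'" unfolding c'_def using finite_N pos by (subst Min_gr_iff) (auto simp: N_def)
    have near: "c' \<le> Lp_norm q (\<lambda>x. f (x - d) - g x)" if "d \<in> N" for d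
      unfolding c'_def using finite_N that by (intro Min_le) auto
    have "min (c powr (1 / q)) c' \<le> Lp_norm q (\<lambda>x. f (x - d) - g x)"
      if "d \<in> int_lattice" "\<not> ae_eq (\<lambda>x. f (x - d)) g" for d
    proof (cases "R < norm d")
      case True
      then have "c powr (1 / q) \<le> Lp_norm q (\<lambda>x. f (x - d) - g x)"
        unfolding Lp_norm_def using c q by (intro powr_mono2 far) auto
      then show ?thesis by simp
    next
      case False
      then show ?thesis using near[of d] that by (simp add: N_def)
    qed
    then show ?thesis using c c' by (intro exI[of _ "min (c powr (1 / q)) c'"]) auto
  qed
qed

lemma finitely_many_pairs_separated:
  fixes W :: "(real^'n \<Rightarrow> real) set"
  assumes q: "q \<ge> 1" and "finite W" and memLp_W: "\<And>f. f \<in> W \<Longrightarrow> memLp q f"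
  shows "\<exists>\<kappa>>0. \<forall>f\<in>W. \<forall>g\<in>W. \<forall>d\<in>int_lattice.
    \<not> ae_eq (\<lambda>x. f (x - d)) g \<longrightarrow> \<kappa> \<le> Lp_norm q (\<lambda>x. f (x - d) - g x)"
proof -
  have "\<exists>c>0. \<forall>d\<in>{d \<in> int_lattice. \<not> ae_eq (\<lambda>x. fst s (x - d)) (snd s)}.
      c \<le> Lp_norm q (\<lambda>x. fst s (x - d) - snd s x)" if "s \<in> W \<times> W" for s
  proof -
    have "memLp q (fst s)" "memLp q (snd s)" using that memLp_W by auto
    from lattice_translates_separated[OF q this] show ?thesis by blast
  qed
  from finite_ex_pos_lower_bound[of "W \<times> W" "\<lambda>s. {d \<in> int_lattice. \<not> ae_eq (\<lambda>x. fst s (x - d)) (snd s)}"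
      "\<lambda>s d. Lp_norm q (\<lambda>x. fst s (x - d) - snd s x)", OF finite_cartesian_product[OF assms(2) assms(2)] this]
  obtain \<kappa> where "0 < \<kappa>" and sep: "\<forall>s\<in>W \<times> W. \<forall>d\<in>{d \<in> int_lattice. \<not> ae_eq (\<lambda>x. fst s (x - d)) (snd s)}.
      \<kappa> \<le> Lp_norm q (\<lambda>x. fst s (x - d) - snd s x)"
    by blast
  moreover have "\<kappa> \<le> Lp_norm q (\<lambda>x. f (x - d) - g x)"
    if "f \<in> W" "g \<in> W" "d \<in> int_lattice" "\<not> ae_eq (\<lambda>x. f (x - d)) g" for f g d
    using bspec[OF sep, of "(f, g)"] that by simp
  ultimately show ?thesis by blast
qed

lemma ae_eq_cong:
  assumes "AE x in lebesgue. f x = f' x" and "AE x in lebesgue. g x = g' x"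
  shows "ae_eq f g \<longleftrightarrow> ae_eq f' g'"
proof -
  have "AE x in lebesgue. (f x = g x) = (f' x = g' x)" using assms by eventually_elim simp
  then show ?thesis unfolding ae_eq_def by (rule eventually_subst)
qed

lemma orbit_pair_translate:
  fixes v w f g :: "real^'n \<Rightarrow> real"
  assumes [measurable]: "v \<in> borel_measurable lebesgue" "w \<in> borel_measurable lebesgue"
    "f \<in> borel_measurable lebesgue" "g \<in> borel_measurable lebesgue"
    and "v \<in> orbit f" "w \<in> orbit g"
  obtains d where "d \<in> int_lattice" and "ae_eq v w \<longleftrightarrow> ae_eq (\<lambda>x. f (x - d)) g"
    and "Lp_norm q (\<lambda>x. v x - w x) = Lp_norm q (\<lambda>x. f (x - d) - g x)"
proof -
  obtain y z where yz: "y \<in> int_lattice" "z \<in> int_lattice"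
    and v: "AE x in lebesgue. v x = f (x - y)" and w: "AE x in lebesgue. w x = g (x - z)"
    using assms(5,6) unfolding orbit_def ae_eq_def by blast
  have [measurable]: "(\<lambda>x. f (x - (y - z))) \<in> borel_measurable lebesgue"
    "(\<lambda>x. f (x - y)) \<in> borel_measurable lebesgue" "(\<lambda>x. g (x - z)) \<in> borel_measurable lebesgue"
    by (simp_all add: borel_measurable_translate)
  have shift: "(\<lambda>x. f (x - z - (y - z))) = (\<lambda>x. f (x - y))" by (simp add: algebra_simps)
  show ?thesis
  proof (rule that)
    show "y - z \<in> int_lattice" using yz by (auto simp: int_lattice_def)
    have "ae_eq v w \<longleftrightarrow> ae_eq (\<lambda>x. f (x - y)) (\<lambda>x. g (x - z))"
      using v w by (rule ae_eq_cong)
    also have "\<dots> \<longleftrightarrow> ae_eq (\<lambda>x. f (x - (y - z))) g"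
      using ae_eq_translate_iff[of "\<lambda>x. f (x - (y - z))" g z] by (simp add: shift)
    finally show "ae_eq v w \<longleftrightarrow> ae_eq (\<lambda>x. f (x - (y - z))) g" .
    have "AE x in lebesgue. v x - w x = f (x - y) - g (x - z)" using v w by eventually_elim simp
    then have "Lp_norm q (\<lambda>x. v x - w x) = Lp_norm q (\<lambda>x. f (x - y) - g (x - z))"
      by (rule Lp_norm_cong_AE[rotated 2]) measurable
    also have "\<dots> = Lp_norm q (\<lambda>x. f (x - (y - z)) - g x)"
      using Lp_norm_translate[of "\<lambda>x. f (x - (y - z)) - g x" q z] by (simp add: shift)
    finally show "Lp_norm q (\<lambda>x. v x - w x) = Lp_norm q (\<lambda>x. f (x - (y - z)) - g x)" .
  qed
qed

theorem lemma3p1: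
  fixes p :: real and Q :: "real^'n \<Rightarrow> real"
    and R :: "(real^'n \<Rightarrow> real) \<Rightarrow> (real^'n \<Rightarrow> real)"
  assumes N2: "CARD('n) \<ge> 2"
    and p_low: "lower_crit CARD('n) < p"
    and p_up: "below_upper_crit CARD('n) p"
    and Q_Linf: "ess_bounded Q"
    and Q_nonneg: "\<forall>x. Q x \<ge> 0"
    and Q_nonzero: "\<not> ae_eq Q (\<lambda>x. 0)"
    and Q_periodic: "\<forall>x. \<forall>y\<in>int_lattice. Q (x + y) = Q x"
    and R: "is_R p R"
    and finite_orbits: "\<exists>W. finite W \<and> W \<subseteq> crit_set p Q R \<and>
                           crit_set p Q R = (\<Union>w\<in>W. orbit w)"
  shows "\<exists>\<kappa>>0. \<forall>v\<in>crit_set p Q R. \<forall>w\<in>crit_set p Q R.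
           \<not> ae_eq v w \<longrightarrow> Lp_norm (conj_exp p) (\<lambda>x. v x - w x) \<ge> \<kappa>"
proof -
  define q where "q = conj_exp p"
  have "2 \<le> lower_crit CARD('n)" using N2 by (simp add: lower_crit_def field_simps)
  then have q: "1 \<le> q" using p_low by (simp add: q_def conj_exp_def field_simps)
  obtain W where W: "finite W" "W \<subseteq> crit_set p Q R" and crit: "crit_set p Q R = (\<Union>w\<in>W. orbit w)"
    using finite_orbits by blast
  have memLp_crit: "memLp q v" if "v \<in> crit_set p Q R" for v
    using that by (simp add: crit_set_def q_def)
  then have memLp_W: "memLp q f" if "f \<in> W" for f using W(2) that by blast
  obtain \<kappa> where \<kappa>: "0 < \<kappa>" and sep: "\<forall>f\<in>W. \<forall>g\<in>W. \<forall>d\<in>int_lattice.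
      \<not> ae_eq (\<lambda>x. f (x - d)) g \<longrightarrow> \<kappa> \<le> Lp_norm q (\<lambda>x. f (x - d) - g x)"
    using finitely_many_pairs_separated[OF q W(1) memLp_W] by blast
  have "\<kappa> \<le> Lp_norm q (\<lambda>x. v x - w x)"
    if v: "v \<in> crit_set p Q R" and w: "w \<in> crit_set p Q R" and vw: "\<not> ae_eq v w" for v w
  proof -
    obtain f g where fg: "f \<in> W" "g \<in> W" "v \<in> orbit f" "w \<in> orbit g" using v w crit by blast
    have "v \<in> borel_measurable lebesgue" "w \<in> borel_measurable lebesgue"
      "f \<in> borel_measurable lebesgue" "g \<in> borel_measurable lebesgue"
      using memLp_crit[OF v] memLp_crit[OF w] memLp_W[OF fg(1)] memLp_W[OF fg(2)] by (simp_all add: memLp_def)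
    then obtain d where d: "d \<in> int_lattice" "ae_eq v w \<longleftrightarrow> ae_eq (\<lambda>x. f (x - d)) g"
      "Lp_norm q (\<lambda>x. v x - w x) = Lp_norm q (\<lambda>x. f (x - d) - g x)"
      using fg(3,4) by (rule orbit_pair_translate)
    have "\<kappa> \<le> Lp_norm q (\<lambda>x. f (x - d) - g x)" using sep fg(1,2) d(1,2) vw by blast
    with d(3) show ?thesis by simp
  qed
  then show ?thesis using \<kappa> unfolding q_def by blast
qed

end
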